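(* Let $\alpha = 1-\frac{1}{W_{-1}(-2/e^3)+1}\approx 1.3871$, where $W_{-1}$ is the lower real branch of the Lambert $W$-function. For any $\epsilon>0$ and $\frac12>\delta>0$, for any fully-dynamic bin packing algorithm $\mathcal{A}$ with asymptotic competitive ratio $(\alpha-\epsilon)$ and additive term $o(\epsilon\cdot n^{\delta})$, there exists a fully-dynamic bin packing input with $n$ items on which $\mathcal{A}$ uses recourse at least $\Omega(\epsilon^2\cdot n^{1-\delta})$ under unit movement costs.
   Context: Fully-dynamic bin packing: a sequence of updates, each inserting or deleting an item; each item $i$ has a size $s_i\in[0,1]$ and a movement cost $c_i\ge 0$. At each time $t$ the algorithm must maintain a packing of the current set of items $\mathcal{I}_t$ into unit-capacity bins; $OPT(\mathcal{I}_t)$ is the minimum number of unit bins needed for $\mathcal{I}_t$. Moving item $i$ between bins costs $c_i$. An algorithm has asymptotic competitive ratio $\alpha'$, additive term $\beta$ and (amortized) recourse $\gamma$ if at every time $t$ it uses at most $\alpha'\cdot OPT(\mathcal{I}_t)+\beta$ bins and its total movement cost up to time $t$ is at most $\gamma\sum_{i=1}^t c_i$, where $c_i$ is the cost of the item updated at time $i$. Unit movement costs: $c_i=1$ for all items. *)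

theory Defs
  imports Complex_Main
begin

text \<open>W_{-1}(x) for -1/e < x < 0: the unique w \<le> -1 with w * exp w = x.\<close>
definition lambertW_m1 :: "real \<Rightarrow> real" where
  "lambertW_m1 x = (THE w. w \<le> -1 \<and> w * exp w = x)"

definition alpha_lb :: real where
  "alpha_lb = 1 - 1 / (lambertW_m1 (- 2 / exp 3) + 1)"

text \<open>Items are identified by natural numbers. An update inserts an item with a
  given size or deletes an item. Unit movement costs throughout.\<close>
datatype update = Ins nat real | Del nat

fun apply_update :: "(nat \<Rightarrow> real option) \<Rightarrow> update \<Rightarrow> (nat \<Rightarrow> real option)" where
  "apply_update S (Ins i s) = S(i \<mapsto> s)"
| "apply_update S (Del i) = S(i := None)"

definition items_after :: "update list \<Rightarrow> (nat \<Rightarrow> real option)" where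
  "items_after \<sigma> = foldl apply_update Map.empty \<sigma>"

fun valid_update :: "(nat \<Rightarrow> real option) \<Rightarrow> update \<Rightarrow> bool" where
  "valid_update S (Ins i s) = (i \<notin> dom S \<and> 0 \<le> s \<and> s \<le> 1)"
| "valid_update S (Del i) = (i \<in> dom S)"

definition valid_input :: "update list \<Rightarrow> bool" where
  "valid_input \<sigma> = (\<forall>t < length \<sigma>. valid_update (items_after (take t \<sigma>)) (\<sigma> ! t))"

text \<open>The input has (at most) n items: at every time at most n items are present.\<close>
definition input_size_le :: "update list \<Rightarrow> nat \<Rightarrow> bool" where
  "input_size_le \<sigma> n = (\<forall>t \<le> length \<sigma>. card (dom (items_after (take t \<sigma>))) \<le> n)"

definition load :: "(nat \<Rightarrow> real option) \<Rightarrow> (nat \<Rightarrow> nat) \<Rightarrow> nat \<Rightarrow> real" where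
  "load S f b = (\<Sum>i \<in> {i \<in> dom S. f i = b}. the (S i))"

definition feasible_packing :: "(nat \<Rightarrow> real option) \<Rightarrow> (nat \<Rightarrow> nat) \<Rightarrow> bool" where
  "feasible_packing S f = (\<forall>b. load S f b \<le> 1)"

definition bins_used :: "(nat \<Rightarrow> real option) \<Rightarrow> (nat \<Rightarrow> nat) \<Rightarrow> nat" where
  "bins_used S f = card (f ` dom S)"

definition OPT :: "(nat \<Rightarrow> real option) \<Rightarrow> nat" where
  "OPT S = (LEAST k. \<exists>f. feasible_packing S f \<and> bins_used S f = k)"

text \<open>An (online, deterministic) algorithm maps the prefix of updates seen so far
  to the packing it maintains after that prefix.\<close>
type_synonym algorithm = "update list \<Rightarrow> (nat \<Rightarrow> nat)"

text \<open>Number of items moved at step t (items present before and after the update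
  whose bin changed); with unit costs this is the movement cost of step t.\<close>
definition moves_at :: "algorithm \<Rightarrow> update list \<Rightarrow> nat \<Rightarrow> nat" where
  "moves_at A \<sigma> t = card {i \<in> dom (items_after (take t \<sigma>)) \<inter> dom (items_after (take (Suc t) \<sigma>)).
                             A (take t \<sigma>) i \<noteq> A (take (Suc t) \<sigma>) i}"

definition total_moves :: "algorithm \<Rightarrow> update list \<Rightarrow> nat" where
  "total_moves A \<sigma> = (\<Sum>t < length \<sigma>. moves_at A \<sigma> t)"

definition competitive_on :: "algorithm \<Rightarrow> real \<Rightarrow> real \<Rightarrow> nat \<Rightarrow> bool" where
  "competitive_on A r \<beta> n =
     (\<forall>\<sigma>. valid_input \<sigma> \<and> input_size_le \<sigma> n \<longrightarrow>
        (\<forall>t \<le> length \<sigma>.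
           feasible_packing (items_after (take t \<sigma>)) (A (take t \<sigma>)) \<and>
           real (bins_used (items_after (take t \<sigma>)) (A (take t \<sigma>)))
             \<le> r * real (OPT (items_after (take t \<sigma>))) + \<beta>))"

end

(* Insert M = K L small items of size 1/L; an algorithm of ratio 1 + a packs them in
   about (1 + a) K bins. A round inserts M/j big items of size 1 - j/L for some j between
   theta L and L/2 and deletes them again. Then OPT is about M/j, and every big item needs a bin of
   its own holding at most j small items, so at most a M/j + O(1) bins keep more than j small items.
   A bin that held more than j + h small items before the round keeps more than j of them unless
   h of them move. If every round moved only eps^2 M/1024 items, summing these bounds over the
   layer-cake profile of the packing of the small items (with the harmonic sum over j giving
   ln (1/(2 theta))) would contradict theta + a (theta + ln (1/(2 theta)) + 1) < 1, an inequality that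
   holds precisely for a below alpha - 1 by the choice of alpha through Lambert W. Hence each
   round of O(K) updates costs eps^2 M/1024 moves; taking K ~ n^delta, L ~ n^(1 - delta) and L
   rounds gives the recourse bound. For eps >= 2 (alpha - 1) the ratio is below 1 and no
   algorithm exists at all for large n. *)

theory Submission
  imports Defs
begin

section \<open>The constant alpha\<close>

lemma mult_exp_strict_antimono:
  fixes v w :: real
  assumes "v < w" "w \<le> -1"
  shows "w * exp w < v * exp v"
proof (rule DERIV_neg_imp_decreasing_open[OF assms(1)])
  fix x assume "v < x" "x < w"
  then have "(1 + x) * exp x < 0" using assms(2) by (simp add: mult_neg_pos)
  moreover have "DERIV (\<lambda>w. w * exp w) x :> (1 + x) * exp x"
    by (auto intro!: derivative_eq_intros simp: algebra_simps)
  ultimately show "\<exists>y. DERIV (\<lambda>w. w * exp w) x :> y \<and> y < 0" by blast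
qed (auto intro!: continuous_intros)

lemma lambertW_m1_mult_exp:
  assumes "w \<le> -1"
  shows "lambertW_m1 (w * exp w) = w"
  unfolding lambertW_m1_def
proof (rule the_equality)
  fix v assume v: "v \<le> -1 \<and> v * exp v = w * exp w"
  show "v = w"
  proof (rule ccontr)
    assume "v \<noteq> w"
    then show False
      using mult_exp_strict_antimono[of v w] mult_exp_strict_antimono[of w v] v assms
      by linarith
  qed
qed (use assms in simp)

lemma lambertW_m1_at_alpha:
  obtains W where "lambertW_m1 (- 2 / exp 3) = W" "W * exp W = - 2 / exp 3" "-4 \<le> W" "W \<le> -3"
proof -
  have e: "2 \<le> exp (1::real)" using exp_ge_add_one_self[of 1] by simp
  have "- 2 / exp 3 \<le> - (4 / exp 1) / exp (3::real)"
  proof -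
    have "4 / exp 1 \<le> (2::real)" using e by (simp add: divide_le_eq)
    then have "4 / exp 1 / exp 3 \<le> (2::real) / exp 3" by (rule divide_right_mono) simp
    then show ?thesis by simp
  qed
  also have "\<dots> = (-4) * exp (-4)"
  proof -
    have "exp 1 * exp 3 = exp (4::real)" by (simp flip: exp_add)
    then show ?thesis by (simp add: exp_minus field_simps)
  qed
  finally have hi: "- 2 / exp 3 \<le> (-4) * exp (-4::real)" .
  have lo: "(-3) * exp (-3::real) \<le> - 2 / exp 3"
    by (simp add: exp_minus divide_inverse)
  have "continuous_on {-4..-3} (\<lambda>w::real. w * exp w)"
    by (intro continuous_intros)
  then obtain W :: real where W: "-4 \<le> W" "W \<le> -3" "W * exp W = - 2 / exp 3"
    using IVT2'[of "\<lambda>w. w * exp w", OF lo hi] by auto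
  show thesis
    by (rule that[of W]) (use W lambertW_m1_mult_exp[of W] in simp_all)
qed

definition astar :: real where "astar = alpha_lb - 1"

definition theta :: real where "theta = astar / (1 + astar)"

text \<open>With \<open>W = lambertW_m1 (-2 / exp 3)\<close> one has \<open>astar = -1 / (W + 1)\<close>, \<open>theta = -1 / W\<close>
  and \<open>ln (1 / (2 * theta)) = -3 - W\<close>, from which the last identity follows.\<close>
lemma astar_theta_facts:
  "1/3 \<le> astar" "astar \<le> 1/2" "1/4 \<le> theta" "theta \<le> 1/3" "0 \<le> ln (1 / (2 * theta))"
  "theta + astar * (theta + ln (1 / (2 * theta)) + 1) = 1"
proof -
  obtain W where W: "lambertW_m1 (- 2 / exp 3) = W" "W * exp W = - 2 / exp 3" "-4 \<le> W" "W \<le> -3"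
    using lambertW_m1_at_alpha .
  have a: "astar = - 1 / (W + 1)"
    using W by (simp add: astar_def alpha_lb_def field_simps)
  have th: "theta = - 1 / W"
    using W by (simp add: theta_def a field_simps)
  show "1/3 \<le> astar" "astar \<le> 1/2" "1/4 \<le> theta" "theta \<le> 1/3"
    using W by (simp_all add: a th field_simps)
  have "ln (- W) + W = ln 2 - 3"
    using W ln_mult[of "- W" "exp W"] by (simp add: ln_div)
  then have l: "ln (1 / (2 * theta)) = - 3 - W"
    using W ln_div[of "- W" 2] by (simp add: th)
  show "0 \<le> ln (1 / (2 * theta))" using W l by simp
  have W0: "W + 1 \<noteq> 0" "W \<noteq> 0" using W by auto
  have "- 1 / W + (- 3 - W) + 1 = - (W + 1)\<^sup>2 / W"
    using W0 by (simp add: field_simps power2_eq_square)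
  moreover have "- 1 / (W + 1) * (- (W + 1)\<^sup>2 / W) = (W + 1) / W"
    using W0 by (simp add: power2_eq_square) (simp add: divide_simps)
  ultimately have "- 1 / W + - 1 / (W + 1) * (- 1 / W + (- 3 - W) + 1) = - 1 / W + (W + 1) / W"
    by simp
  also have "\<dots> = 1" using W0 by (simp add: field_simps)
  finally have "- 1 / W + - 1 / (W + 1) * (- 1 / W + (- 3 - W) + 1) = 1" .
  then show "theta + astar * (theta + ln (1 / (2 * theta)) + 1) = 1"
    unfolding l by (simp only: a th)
qed

section \<open>Inputs and movement cost\<close>

lemma items_after_append: "items_after (xs @ ys) = foldl apply_update (items_after xs) ys"
  by (simp add: items_after_def)

lemma items_after_Nil: "items_after [] = Map.empty"
  by (simp add: items_after_def)

lemma finite_dom_items_after: "finite (dom (items_after xs))"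
proof -
  have upd: "finite (dom (apply_update S u))" if "finite (dom S)" for S u
    using that by (cases u) auto
  have "finite (dom (foldl apply_update S us))" if "finite (dom S)" for S us
    using that by (induction us arbitrary: S) (simp_all add: upd)
  then show ?thesis by (simp add: items_after_def)
qed

lemma valid_input_Nil: "valid_input []"
  by (simp add: valid_input_def)

lemma input_size_le_Nil: "input_size_le [] n"
  by (simp add: input_size_le_def items_after_def)

lemma valid_input_append:
  "valid_input (xs @ ys) \<longleftrightarrow> valid_input xs \<and>
     (\<forall>t<length ys. valid_update (items_after (xs @ take t ys)) (ys ! t))"
proof -
  have "(\<forall>t<length (xs @ ys). P t) \<longleftrightarrow> (\<forall>t<length xs. P t) \<and> (\<forall>t<length ys. P (length xs + t))" for P
    by (auto, metis add_diff_inverse_nat nat_add_left_cancel_less)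
  then show ?thesis by (simp add: valid_input_def nth_append)
qed

lemma input_size_le_append:
  "input_size_le (xs @ ys) n \<longleftrightarrow> input_size_le xs n \<and>
     (\<forall>t\<le>length ys. card (dom (items_after (xs @ take t ys))) \<le> n)"
proof -
  have "(\<forall>t\<le>length (xs @ ys). P t) \<longleftrightarrow> (\<forall>t\<le>length xs. P t) \<and> (\<forall>t\<le>length ys. P (length xs + t))" for P
    by (auto, metis add_le_cancel_left le_Suc_ex nat_le_linear)
  then show ?thesis by (simp add: input_size_le_def)
qed

lemma input_size_le_last: "input_size_le xs n \<Longrightarrow> card (dom (items_after xs)) \<le> n"
  unfolding input_size_le_def by (metis order_refl take_all)

lemma total_moves_append:
  "total_moves A (xs @ ys) = total_moves A xs + (\<Sum>t<length ys. moves_at A (xs @ ys) (length xs + t))"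
proof -
  have "total_moves A (xs @ ys) = (\<Sum>t\<in>{0..<length xs + length ys}. moves_at A (xs @ ys) t)"
    by (simp add: total_moves_def atLeast0LessThan)
  also have "\<dots> = (\<Sum>t\<in>{0..<length xs}. moves_at A (xs @ ys) t) + (\<Sum>t\<in>{length xs..<length xs + length ys}. moves_at A (xs @ ys) t)"
    by (rule sum.atLeastLessThan_concat[symmetric]) auto
  also have "(\<Sum>t\<in>{0..<length xs}. moves_at A (xs @ ys) t) = total_moves A xs"
    by (simp add: total_moves_def moves_at_def atLeast0LessThan)
  also have "(\<Sum>t\<in>{length xs..<length xs + length ys}. moves_at A (xs @ ys) t)
      = (\<Sum>t<length ys. moves_at A (xs @ ys) (length xs + t))"
    using sum.shift_bounds_nat_ivl[of "moves_at A (xs @ ys)" 0 "length xs" "length ys"]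
    by (simp add: atLeast0LessThan add.commute)
  finally show ?thesis .
qed

text \<open>An item of \<open>X\<close> is present before and after every step, so each change of its bin is
  counted by \<open>moves_at\<close>.\<close>
lemma card_changed_bins_le_moves:
  assumes "finite X" "t0 \<le> t1" "t1 \<le> length \<sigma>"
    and "\<And>t. t0 \<le> t \<Longrightarrow> t \<le> t1 \<Longrightarrow> X \<subseteq> dom (items_after (take t \<sigma>))"
  shows "card {i\<in>X. A (take t0 \<sigma>) i \<noteq> A (take t1 \<sigma>) i} \<le> (\<Sum>t\<in>{t0..<t1}. moves_at A \<sigma> t)"
  using assms(2-4)
proof (induction t1 rule: dec_induct)
  case base
  then show ?case by simp
next
  case (step k)
  let ?D = "\<lambda>u v. {i\<in>X. A (take u \<sigma>) i \<noteq> A (take v \<sigma>) i}"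
  have "?D k (Suc k) \<subseteq> {i \<in> dom (items_after (take k \<sigma>)) \<inter> dom (items_after (take (Suc k) \<sigma>)).
                             A (take k \<sigma>) i \<noteq> A (take (Suc k) \<sigma>) i}"
    using step.prems(2)[of k] step.prems(2)[of "Suc k"] step.hyps by auto
  then have step_moves: "card (?D k (Suc k)) \<le> moves_at A \<sigma> k"
    unfolding moves_at_def by (rule card_mono[rotated]) (simp add: finite_dom_items_after)
  have "card (?D t0 (Suc k)) \<le> card (?D t0 k \<union> ?D k (Suc k))"
    by (rule card_mono) (use assms(1) in auto)
  also have "\<dots> \<le> card (?D t0 k) + card (?D k (Suc k))"
    by (rule card_Un_le)
  also have "\<dots> \<le> (\<Sum>t\<in>{t0..<k}. moves_at A \<sigma> t) + moves_at A \<sigma> k"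
    using step step_moves by simp
  finally show ?case using step.hyps by simp
qed

definition ins_block :: "nat \<Rightarrow> real \<Rightarrow> nat \<Rightarrow> update list" where
  "ins_block c x m = map (\<lambda>q. Ins (c + q) x) [0..<m]"

definition del_block :: "nat \<Rightarrow> nat \<Rightarrow> update list" where
  "del_block c m = map (\<lambda>q. Del (c + q)) [0..<m]"

lemma length_ins_block [simp]: "length (ins_block c x m) = m"
  by (simp add: ins_block_def)

lemma length_del_block [simp]: "length (del_block c m) = m"
  by (simp add: del_block_def)

lemma nth_ins_block [simp]: "t < m \<Longrightarrow> ins_block c x m ! t = Ins (c + t) x"
  by (simp add: ins_block_def)

lemma nth_del_block [simp]: "t < m \<Longrightarrow> del_block c m ! t = Del (c + t)"
  by (simp add: del_block_def)

lemma take_ins_block: "t \<le> m \<Longrightarrow> take t (ins_block c x m) = ins_block c x t"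
  by (simp add: ins_block_def take_map)

lemma take_del_block: "t \<le> m \<Longrightarrow> take t (del_block c m) = del_block c t"
  by (simp add: del_block_def take_map)

lemma items_after_append_ins_block:
  "items_after (xs @ ins_block c x m) = (\<lambda>i. if c \<le> i \<and> i < c + m then Some x else items_after xs i)"
proof -
  have "foldl apply_update S (ins_block c x m) = (\<lambda>i. if c \<le> i \<and> i < c + m then Some x else S i)" for S
    by (induction m) (auto simp: ins_block_def fun_eq_iff)
  then show ?thesis by (simp add: items_after_append)
qed

lemma items_after_append_del_block:
  "items_after (xs @ del_block c m) = (\<lambda>i. if c \<le> i \<and> i < c + m then None else items_after xs i)"
proof -
  have "foldl apply_update S (del_block c m) = (\<lambda>i. if c \<le> i \<and> i < c + m then None else S i)" for S
    by (induction m) (auto simp: del_block_def fun_eq_iff)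
  then show ?thesis by (simp add: items_after_append)
qed

lemma valid_input_append_ins_block:
  assumes "valid_input xs" "\<And>i. c \<le> i \<Longrightarrow> i < c + m \<Longrightarrow> items_after xs i = None" "0 \<le> x" "x \<le> 1"
  shows "valid_input (xs @ ins_block c x m)"
  using assms by (auto simp: valid_input_append take_ins_block items_after_append_ins_block)

lemma valid_input_append_del_block:
  assumes "valid_input xs" "\<And>i. c \<le> i \<Longrightarrow> i < c + m \<Longrightarrow> items_after xs i \<noteq> None"
  shows "valid_input (xs @ del_block c m)"
  using assms by (auto simp: valid_input_append take_del_block items_after_append_del_block)

lemma input_size_le_append_ins_block:
  assumes "input_size_le xs n" "card (dom (items_after xs) \<union> {c..<c + m}) \<le> n"
  shows "input_size_le (xs @ ins_block c x m) n"
  unfolding input_size_le_append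
proof (intro conjI allI impI assms(1))
  fix t assume "t \<le> length (ins_block c x m)"
  then have "dom (items_after (xs @ take t (ins_block c x m))) \<subseteq> dom (items_after xs) \<union> {c..<c + m}"
    by (auto simp: take_ins_block items_after_append_ins_block split: if_splits)
  then have "card (dom (items_after (xs @ take t (ins_block c x m)))) \<le> card (dom (items_after xs) \<union> {c..<c + m})"
    by (rule card_mono[rotated]) (simp add: finite_dom_items_after)
  then show "card (dom (items_after (xs @ take t (ins_block c x m)))) \<le> n"
    using assms(2) by simp
qed

lemma input_size_le_append_del_block:
  assumes "input_size_le xs n"
  shows "input_size_le (xs @ del_block c m) n"
  unfolding input_size_le_append
proof (intro conjI allI impI assms)
  fix t assume "t \<le> length (del_block c m)"
  then have "dom (items_after (xs @ take t (del_block c m))) \<subseteq> dom (items_after xs)"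
    by (auto simp: take_del_block items_after_append_del_block split: if_splits)
  then have "card (dom (items_after (xs @ take t (del_block c m)))) \<le> card (dom (items_after xs))"
    by (rule card_mono[rotated]) (simp add: finite_dom_items_after)
  then show "card (dom (items_after (xs @ take t (del_block c m)))) \<le> n"
    using input_size_le_last[OF assms] by simp
qed

section \<open>Packings of small and big items\<close>

lemma OPT_le_card:
  assumes "feasible_packing S f" "f ` dom S \<subseteq> B" "finite B"
  shows "OPT S \<le> card B"
proof -
  have "OPT S \<le> bins_used S f" unfolding OPT_def by (rule Least_le) (use assms in blast)
  also have "\<dots> \<le> card B" unfolding bins_used_def by (rule card_mono[OF assms(3,2)])
  finally show ?thesis .
qed

lemma total_size_le_bins_used:
  assumes "feasible_packing S f" "finite (dom S)"
  shows "(\<Sum>i\<in>dom S. the (S i)) \<le> real (bins_used S f)"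
proof -
  have "(\<Sum>i\<in>dom S. the (S i)) = (\<Sum>b\<in>f ` dom S. load S f b)"
    unfolding load_def by (rule sum.group[symmetric]) (use assms(2) in auto)
  also have "\<dots> \<le> (\<Sum>b\<in>f ` dom S. 1)"
    using assms(1) by (intro sum_mono) (simp add: feasible_packing_def)
  finally show ?thesis by (simp add: bins_used_def)
qed

definition small_items :: "nat \<Rightarrow> real \<Rightarrow> nat \<Rightarrow> real option" where
  "small_items M s = (\<lambda>i. if i < M then Some s else None)"

definition small_big_items :: "nat \<Rightarrow> real \<Rightarrow> nat \<Rightarrow> real \<Rightarrow> nat \<Rightarrow> real option" where
  "small_big_items M s m x = (\<lambda>i. if i < M then Some s else if i < M + m then Some x else None)"

lemma dom_small_items: "dom (small_items M s) = {..<M}"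
  by (auto simp: small_items_def split: if_splits)

lemma dom_small_big_items: "dom (small_big_items M s m x) = {..<M + m}"
  by (auto simp: small_big_items_def split: if_splits)

lemma load_small_items: "load (small_items M s) f b = real (card {i. i < M \<and> f i = b}) * s"
proof -
  have "{i \<in> dom (small_items M s). f i = b} = {i. i < M \<and> f i = b}"
    by (auto simp: dom_small_items)
  moreover have "(\<Sum>i\<in>{i. i < M \<and> f i = b}. the (small_items M s i)) = (\<Sum>i\<in>{i. i < M \<and> f i = b}. s)"
    by (rule sum.cong) (auto simp: small_items_def)
  ultimately show ?thesis unfolding load_def by simp
qed

lemma load_small_big_items:
  "load (small_big_items M s m x) f b =
     real (card {i. i < M \<and> f i = b}) * s + real (card {i. M \<le> i \<and> i < M + m \<and> f i = b}) * x"
proof -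
  have split: "{i \<in> dom (small_big_items M s m x). f i = b} =
      {i. i < M \<and> f i = b} \<union> {i. M \<le> i \<and> i < M + m \<and> f i = b}"
    by (auto simp: dom_small_big_items)
  have fin: "finite {i. M \<le> i \<and> i < M + m \<and> f i = b}"
    by (rule finite_subset[of _ "{..<M + m}"]) auto
  have "load (small_big_items M s m x) f b
      = (\<Sum>i\<in>{i. i < M \<and> f i = b}. the (small_big_items M s m x i))
        + (\<Sum>i\<in>{i. M \<le> i \<and> i < M + m \<and> f i = b}. the (small_big_items M s m x i))"
    unfolding load_def split by (rule sum.union_disjoint) (use fin in auto)
  also have "\<dots> = (\<Sum>i\<in>{i. i < M \<and> f i = b}. s) + (\<Sum>i\<in>{i. M \<le> i \<and> i < M + m \<and> f i = b}. x)"
    by (intro arg_cong2[where f = "(+)"] sum.cong) (auto simp: small_big_items_def)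
  finally show ?thesis by simp
qed

lemma card_div_fiber_le: "0 < L \<Longrightarrow> card {i. i < M \<and> i div L = b} \<le> (L::nat)"
proof -
  assume "0 < L"
  then have "{i. i < M \<and> i div L = b} \<subseteq> {b * L..<b * L + L}"
  proof (intro subsetI)
    fix i assume "i \<in> {i. i < M \<and> i div L = b}"
    then have "i = b * L + i mod L" "i mod L < L"
      using \<open>0 < L\<close> by (auto simp: mult.commute)
    then show "i \<in> {b * L..<b * L + L}" by (simp only: atLeastLessThan_iff) linarith
  qed
  then have "card {i. i < M \<and> i div L = b} \<le> card {b * L..<b * L + L}"
    by (rule card_mono[rotated]) simp
  then show ?thesis by simp
qed

lemma OPT_small_items:
  assumes "0 < L"
  shows "OPT (small_items (K * L) (1 / real L)) \<le> K"
proof -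
  have "feasible_packing (small_items (K * L) (1 / real L)) (\<lambda>i. i div L)"
    using card_div_fiber_le[OF assms]
    by (simp add: feasible_packing_def load_small_items divide_le_eq assms)
  moreover have "(\<lambda>i. i div L) ` dom (small_items (K * L) (1 / real L)) \<subseteq> {..<K}"
    by (auto simp: dom_small_items less_mult_imp_div_less)
  ultimately show ?thesis using OPT_le_card[of _ _ "{..<K}"] by fastforce
qed

lemma card_fiber_le_of_feasible_small_items:
  assumes "feasible_packing (small_items M (1 / real L)) f" "0 < L"
  shows "card {i. i < M \<and> f i = b} \<le> L"
proof -
  have "real (card {i. i < M \<and> f i = b}) * (1 / real L) \<le> 1"
    using assms(1) by (simp add: feasible_packing_def load_small_items)
  then have "real (card {i. i < M \<and> f i = b}) \<le> real L" using assms(2) by (simp add: field_simps)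
  then show ?thesis by (simp only: of_nat_le_iff)
qed

text \<open>Groups of \<open>j\<close> small items share a bin with one big item.\<close>
lemma OPT_small_big_items:
  assumes "0 < j" "0 \<le> s" "0 \<le> x" "real j * s + x \<le> 1"
  shows "OPT (small_big_items M s (M div j) x) \<le> M div j + 1"
proof -
  define f where "f i = (if i < M then i div j else i - M)" for i
  have "feasible_packing (small_big_items M s (M div j) x) f"
    unfolding feasible_packing_def load_small_big_items
  proof
    fix b
    have "{i. i < M \<and> f i = b} = {i. i < M \<and> i div j = b}" by (auto simp: f_def)
    then have "real (card {i. i < M \<and> f i = b}) * s \<le> real j * s"
      using card_div_fiber_le[OF assms(1)] assms(2) by (simp add: mult_right_mono)
    moreover have "card {i. M \<le> i \<and> i < M + M div j \<and> f i = b} \<le> card {M + b}"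
      by (rule card_mono) (auto simp: f_def)
    then have "real (card {i. M \<le> i \<and> i < M + M div j \<and> f i = b}) * x \<le> 1 * x"
      using assms(3) by (intro mult_right_mono) auto
    ultimately show "real (card {i. i < M \<and> f i = b}) * s
        + real (card {i. M \<le> i \<and> i < M + M div j \<and> f i = b}) * x \<le> 1"
      using assms(4) by simp
  qed
  moreover have "f ` dom (small_big_items M s (M div j) x) \<subseteq> {..M div j}"
    by (auto simp: f_def dom_small_big_items div_le_mono)
  ultimately show ?thesis using OPT_le_card[of _ _ "{..M div j}"] by fastforce
qed

lemma mem_image_if_card_fiber_gt:
  assumes "j < card {i. i < M \<and> f i = b}"
  shows "b \<in> f ` {..<M}"
proof -
  have "{i. i < M \<and> f i = b} \<noteq> {}" using assms by (metis card.empty not_less0)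
  then show ?thesis by blast
qed

text \<open>Big items lie in pairwise distinct bins, none of which also holds more than \<open>j\<close> small items.\<close>
lemma bins_used_small_big_items_ge:
  assumes feas: "feasible_packing (small_big_items M s m x) f" and s: "0 < s" and x: "1 < 2 * x"
    and jx: "1 < real (Suc j) * s + x"
  shows "m + card {b. j < card {i. i < M \<and> f i = b}} \<le> bins_used (small_big_items M s m x) f"
proof -
  let ?small = "\<lambda>b. card {i. i < M \<and> f i = b}" and ?big = "\<lambda>b. card {i. M \<le> i \<and> i < M + m \<and> f i = b}"
  define G where "G = {b. j < ?small b}"
  have ld: "real (?small b) * s + real (?big b) * x \<le> 1" for b
    using feas unfolding feasible_packing_def load_small_big_items by blast
  have finB: "finite {i. M \<le> i \<and> i < M + m \<and> f i = b}" for b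
    by (rule finite_subset[of _ "{..<M + m}"]) auto
  have big_le_1: "?big b \<le> 1" for b
  proof (rule ccontr)
    assume "\<not> ?big b \<le> 1"
    then have "2 * x \<le> real (?big b) * x" using x by (intro mult_right_mono) auto
    moreover have "0 \<le> real (?small b) * s" using s by simp
    ultimately show False using ld[of b] x by linarith
  qed
  have inj: "inj_on f {M..<M + m}"
  proof (rule inj_onI, rule ccontr)
    fix i i' assume ii: "i \<in> {M..<M + m}" "i' \<in> {M..<M + m}" "f i = f i'" "i \<noteq> i'"
    then have "card {i, i'} \<le> ?big (f i)" by (intro card_mono[OF finB]) auto
    then show False using ii(4) big_le_1[of "f i"] by simp
  qed
  have disj: "f ` {M..<M + m} \<inter> G = {}"
  proof (rule ccontr)
    assume "f ` {M..<M + m} \<inter> G \<noteq> {}"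
    then obtain i where i: "i \<in> {M..<M + m}" "j < ?small (f i)" unfolding G_def by blast
    have "1 \<le> ?big (f i)" using card_mono[OF finB, of "{i}" "f i"] i(1) by auto
    then have "real (Suc j) * s + 1 * x \<le> real (?small (f i)) * s + real (?big (f i)) * x"
      using i(2) s x by (intro add_mono mult_right_mono) auto
    then show False using ld[of "f i"] jx by linarith
  qed
  have sub: "f ` {M..<M + m} \<union> G \<subseteq> f ` dom (small_big_items M s m x)"
    using mem_image_if_card_fiber_gt[of j M f] by (fastforce simp: G_def dom_small_big_items)
  have fin: "finite (f ` dom (small_big_items M s m x))" by (simp add: dom_small_big_items)
  have "m + card G = card (f ` {M..<M + m} \<union> G)"
    using card_image[OF inj] finite_subset[OF sub fin] disj by (simp add: card_Un_disjoint)
  also have "\<dots> \<le> bins_used (small_big_items M s m x) f"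
    unfolding bins_used_def by (rule card_mono[OF fin sub])
  finally show ?thesis by (simp add: G_def)
qed

section \<open>Counting bins\<close>

lemma card_eq_sum_layers:
  fixes f :: "nat \<Rightarrow> nat"
  assumes "\<And>b. card {i. i < M \<and> f i = b} \<le> L"
  shows "M = (\<Sum>j<L. card {b\<in>f ` {..<M}. j < card {i. i < M \<and> f i = b}})"
proof -
  define c where "c b = card {i. i < M \<and> f i = b}" for b
  have "M = card (\<Union>b\<in>f ` {..<M}. {i. i < M \<and> f i = b})"
    by (subst card_lessThan[symmetric], rule arg_cong[where f = card]) auto
  also have "\<dots> = (\<Sum>b\<in>f ` {..<M}. c b)"
    unfolding c_def by (rule card_UN_disjoint) auto
  also have "\<dots> = (\<Sum>b\<in>f ` {..<M}. \<Sum>j<L. if j < c b then 1 else 0)"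
  proof (rule sum.cong[OF refl])
    fix b
    have "{j\<in>{..<L}. j < c b} = {..<c b}" using assms[of b] by (auto simp: c_def)
    then show "c b = (\<Sum>j<L. if j < c b then 1 else 0)"
      by (simp flip: sum.inter_filter)
  qed
  also have "\<dots> = (\<Sum>j<L. \<Sum>b\<in>f ` {..<M}. if j < c b then 1 else 0)"
    by (rule sum.swap)
  also have "\<dots> = (\<Sum>j<L. card {b\<in>f ` {..<M}. j < c b})"
    by (simp flip: sum.inter_filter)
  finally show ?thesis by (simp add: c_def)
qed

text \<open>A bin of \<open>f0\<close> with more than \<open>j + h\<close> items either keeps more than \<open>j\<close> of them under \<open>f1\<close>,
  or at least \<open>h\<close> of its items change bins.\<close>
lemma card_full_bins_le_moves:
  fixes f0 f1 :: "nat \<Rightarrow> nat"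
  assumes "0 < h"
  shows "real (card {b\<in>f0 ` {..<M}. j + h < card {i. i < M \<and> f0 i = b}})
    \<le> real (card {b. j < card {i. i < M \<and> f1 i = b}}) + real (card {i. i < M \<and> f0 i \<noteq> f1 i}) / real h"
proof -
  define stay where "stay b = card {i. i < M \<and> f0 i = b \<and> f1 i = b}" for b
  define leave where "leave b = {i. i < M \<and> f0 i = b \<and> f1 i \<noteq> b}" for b
  define X where "X = {b\<in>f0 ` {..<M}. j + h < card {i. i < M \<and> f0 i = b} \<and> stay b \<le> j}"
  have finX: "finite X" by (simp add: X_def)
  have split: "card {i. i < M \<and> f0 i = b} = stay b + card (leave b)" for b
    unfolding stay_def leave_def by (subst card_Un_disjoint[symmetric]) (auto intro: arg_cong[where f = card])
  have finF1: "finite {b. j < card {i. i < M \<and> f1 i = b}}"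
    by (rule finite_subset[of _ "f1 ` {..<M}"]) (use mem_image_if_card_fiber_gt in auto)
  have "{b\<in>f0 ` {..<M}. j + h < card {i. i < M \<and> f0 i = b}} \<subseteq> {b. j < card {i. i < M \<and> f1 i = b}} \<union> X"
  proof
    fix b assume b: "b \<in> {b\<in>f0 ` {..<M}. j + h < card {i. i < M \<and> f0 i = b}}"
    have "stay b \<le> card {i. i < M \<and> f1 i = b}" unfolding stay_def by (rule card_mono) auto
    then show "b \<in> {b. j < card {i. i < M \<and> f1 i = b}} \<union> X" using b by (auto simp: X_def)
  qed
  then have "card {b\<in>f0 ` {..<M}. j + h < card {i. i < M \<and> f0 i = b}} \<le> card ({b. j < card {i. i < M \<and> f1 i = b}} \<union> X)"
    by (rule card_mono[rotated]) (use finF1 finX in auto)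
  then have full: "card {b\<in>f0 ` {..<M}. j + h < card {i. i < M \<and> f0 i = b}} \<le> card {b. j < card {i. i < M \<and> f1 i = b}} + card X"
    using card_Un_le order_trans by blast
  have "h * card X = (\<Sum>b\<in>X. h)" by simp
  also have "\<dots> \<le> (\<Sum>b\<in>X. card (leave b))"
    by (rule sum_mono) (use split in \<open>fastforce simp: X_def\<close>)
  also have "\<dots> = card (\<Union>b\<in>X. leave b)"
    by (rule card_UN_disjoint[symmetric]) (use finX in \<open>auto simp: leave_def\<close>)
  also have "\<dots> \<le> card {i. i < M \<and> f0 i \<noteq> f1 i}"
    by (rule card_mono) (auto simp: leave_def)
  finally have "real h * real (card X) \<le> real (card {i. i < M \<and> f0 i \<noteq> f1 i})"
    by (metis of_nat_le_iff of_nat_mult)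
  then have "real (card X) \<le> real (card {i. i < M \<and> f0 i \<noteq> f1 i}) / real h"
    using assms by (simp add: le_divide_eq mult.commute)
  then show ?thesis using full by linarith
qed

lemma sum_inverse_le_ln:
  assumes "2 \<le> j0" "j0 \<le> P"
  shows "(\<Sum>j\<in>{j0..<P}. 1 / real j) \<le> ln (real P - 1) - ln (real j0 - 1)"
  using assms(2)
proof (induction P rule: dec_induct)
  case base
  then show ?case by simp
next
  case (step P)
  have P: "2 \<le> P" using assms step by simp
  have "1 - 1 / real P = (real P - 1) / real P" using P by (simp add: field_simps)
  then have "ln (real P - 1) - ln (real P) = ln (1 - 1 / real P)" using P by (simp add: ln_div)
  also have "\<dots> \<le> - (1 / real P)" using ln_le_minus_one[of "1 - 1 / real P"] P by simp
  finally show ?case using step by simp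
qed

section \<open>One round of the adversary\<close>

lemma competitive_on_final:
  assumes "competitive_on A r \<beta> n" "valid_input \<sigma>" "input_size_le \<sigma> n"
  shows "feasible_packing (items_after \<sigma>) (A \<sigma>)"
    "real (bins_used (items_after \<sigma>) (A \<sigma>)) \<le> r * real (OPT (items_after \<sigma>)) + \<beta>"
  using assms unfolding competitive_on_def by (metis order_refl take_all)+

lemma competitive_on_mono:
  assumes "competitive_on A r \<beta> n" "r \<le> r'"
  shows "competitive_on A r' \<beta> n"
  using assms unfolding competitive_on_def
  by (smt (verit, best) mult_right_mono of_nat_0_le_iff)

lemma competitive_on_beta_nonneg:
  assumes "competitive_on A r \<beta> n"
  shows "0 \<le> \<beta>"
proof -
  have "OPT Map.empty = 0"
    using OPT_le_card[of Map.empty "\<lambda>_. 0" "{}"] by (simp add: feasible_packing_def load_def)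
  then show ?thesis
    using competitive_on_final(2)[OF assms valid_input_Nil input_size_le_Nil]
    by (simp add: items_after_Nil bins_used_def)
qed

lemma full_bins_le_after_big_block:
  fixes A :: algorithm
  assumes comp: "competitive_on A (1 + a) \<beta> n" and a: "0 \<le> a"
    and p: "valid_input p" "input_size_le p n" "items_after p = small_items M (1 / real L)"
    and j: "0 < j" "2 * j < L" "M + M div j \<le> n" and h: "0 < h"
  shows "real (card {b\<in>A p ` {..<M}. j + h < card {i. i < M \<and> A p i = b}})
    \<le> a * real M / real j + (1 + a) + \<beta>
      + real (card {i. i < M \<and> A p i \<noteq> A (p @ ins_block M (1 - real j / real L) (M div j)) i}) / real h"
proof -
  define s where "s = 1 / real L"
  define x where "x = 1 - real j / real L"
  define m where "m = M div j"
  define q where "q = p @ ins_block M x m"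
  have L: "0 < L" using j by simp
  have x: "0 \<le> x" "x \<le> 1" "1 < 2 * x" "1 < real (Suc j) * s + x" "real j * s + x \<le> 1"
    using j L by (auto simp: x_def s_def field_simps)
  have q_items: "items_after q = small_big_items M s m x"
    using p(3) by (auto simp: q_def items_after_append_ins_block small_items_def small_big_items_def s_def fun_eq_iff)
  have q_valid: "valid_input q"
    unfolding q_def by (rule valid_input_append_ins_block[OF p(1) _ x(1,2)]) (simp add: p(3) small_items_def)
  have "dom (items_after p) \<union> {M..<M + m} = {..<M + m}" by (auto simp: p(3) dom_small_items)
  then have q_size: "input_size_le q n"
    unfolding q_def using j(3) by (intro input_size_le_append_ins_block[OF p(2)]) (simp add: m_def)
  define G where "G = card {b. j < card {i. i < M \<and> A q i = b}}"
  have "m + G \<le> bins_used (small_big_items M s m x) (A q)"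
    unfolding G_def using competitive_on_final(1)[OF comp q_valid q_size] q_items L x
    by (intro bins_used_small_big_items_ge) (auto simp: s_def)
  also have "real \<dots> \<le> (1 + a) * real (OPT (small_big_items M s m x)) + \<beta>"
    using competitive_on_final(2)[OF comp q_valid q_size] q_items by simp
  also have "\<dots> \<le> (1 + a) * (real m + 1) + \<beta>"
    using OPT_small_big_items[OF j(1), of s x M] x a by (intro add_right_mono mult_left_mono) (auto simp: s_def m_def)
  finally have "real G \<le> a * real m + (1 + a) + \<beta>" by (simp add: algebra_simps)
  also have "a * real m \<le> a * (real M / real j)"
    using a of_nat_div_le_of_nat[of M j] unfolding m_def by (intro mult_left_mono) simp_all
  finally have "real G \<le> a * real M / real j + (1 + a) + \<beta>" by simp
  then show ?thesis
    using card_full_bins_le_moves[OF h, of "A p" M j "A q"] by (simp add: G_def q_def x_def m_def)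
qed

lemma total_moves_ge_changed_by_ins_block:
  assumes "finite X" "X \<subseteq> dom (items_after p)" "X \<inter> {c..<c + m} = {}"
  shows "total_moves A p + card {i\<in>X. A p i \<noteq> A (p @ ins_block c x m) i}
    \<le> total_moves A (p @ ins_block c x m @ ys)"
proof -
  define \<sigma> where "\<sigma> = p @ ins_block c x m @ ys"
  have take: "take (length p + t) \<sigma> = p @ ins_block c x t" if "t \<le> m" for t
    using that by (simp add: \<sigma>_def take_ins_block)
  have "X \<subseteq> dom (items_after (take t \<sigma>))" if "length p \<le> t" "t \<le> length p + m" for t
    using take[of "t - length p"] that assms(2,3)
    by (auto simp: items_after_append_ins_block)
  then have "card {i\<in>X. A (take (length p) \<sigma>) i \<noteq> A (take (length p + m) \<sigma>) i}
      \<le> (\<Sum>t\<in>{length p..<length p + m}. moves_at A \<sigma> t)"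
    by (intro card_changed_bins_le_moves assms(1)) (auto simp: \<sigma>_def)
  also have "\<dots> = (\<Sum>t<m. moves_at A \<sigma> (length p + t))"
    using sum.shift_bounds_nat_ivl[of "moves_at A \<sigma>" 0 "length p" m]
    by (simp add: atLeast0LessThan add.commute)
  also have "\<dots> \<le> (\<Sum>t<length (ins_block c x m @ ys). moves_at A \<sigma> (length p + t))"
    by (rule sum_mono2) auto
  finally show ?thesis
    using take[of 0] take[of m] total_moves_append[of A p "ins_block c x m @ ys"]
    by (simp add: \<sigma>_def take_ins_block)
qed

lemma iterate_rounds:
  fixes Q :: "update list \<Rightarrow> bool" and g :: real
  assumes "Q p0"
    and step: "\<And>p. Q p \<Longrightarrow> \<exists>q. Q q \<and> real (total_moves A p) + g \<le> real (total_moves A q)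
                                 \<and> length q \<le> length p + l"
  shows "\<exists>q. Q q \<and> real k * g \<le> real (total_moves A q) \<and> length q \<le> length p0 + k * l"
proof (induction k)
  case 0
  show ?case using assms(1) by auto
next
  case (Suc k)
  then obtain p where "Q p" "real k * g \<le> real (total_moves A p)" "length p \<le> length p0 + k * l"
    by blast
  with step[OF \<open>Q p\<close>] show ?case by (fastforce simp: algebra_simps)
qed

section \<open>The adversary\<close>

text \<open>Parameters of the adversary: \<open>M = K * L\<close> small items of size \<open>1/L\<close> fill about \<open>K\<close> bins;
  a round inserts big items leaving room for \<open>j \<in> {j0..<P}\<close> small items each, where
  \<open>j0 \<approx> theta * L\<close> and \<open>h \<approx> \<epsilon> * L / 32\<close> is the slack used in the counting argument.\<close>
locale adversary =
  fixes A :: algorithm and \<epsilon> \<beta> :: real and n K P h j0 :: nat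
  assumes competitive: "competitive_on A (alpha_lb - \<epsilon>) \<beta> n"
    and eps: "0 < \<epsilon>" "\<epsilon> < 2 * astar"
    and K: "1 \<le> K" and P: "2 \<le> P"
    and room: "K * (2 * P) + 4 * K \<le> n"
    and j0: "theta * real (2 * P) \<le> real j0 - 1" "real j0 \<le> theta * real (2 * P) + 2"
    and h: "\<epsilon> / 32 * real (2 * P) \<le> real h" "real h \<le> \<epsilon> / 32 * real (2 * P) + 1" "j0 + h \<le> P"
    and small: "6 / real (2 * P) + 1 / real (P - 1) + 2 / real K + 2 * \<beta> / real K < \<epsilon> / 32"
begin

abbreviation L :: nat where "L \<equiv> 2 * P"

abbreviation M :: nat where "M \<equiv> K * L"

text \<open>The ratio \<open>alpha_lb - \<epsilon>\<close> is weakened to \<open>1 + excess\<close>; the remaining \<open>\<epsilon> / 2\<close> pays for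
  the error terms.\<close>
definition excess :: real where "excess = astar - \<epsilon> / 2"

lemma excess_bounds: "0 \<le> excess" "excess \<le> 1"
  using eps astar_theta_facts by (auto simp: excess_def)

lemma competitive_excess: "competitive_on A (1 + excess) \<beta> n"
  by (rule competitive_on_mono[OF competitive]) (simp add: excess_def astar_def eps)

lemma beta_nonneg: "0 \<le> \<beta>"
  by (rule competitive_on_beta_nonneg[OF competitive])

lemma h_pos: "0 < h"
proof -
  have "0 < \<epsilon> / 32 * real L" using eps P by simp
  then show ?thesis using h(1) by linarith
qed

lemma theta_L_ge: "1 \<le> theta * real L"
proof -
  have "1/4 * 4 \<le> theta * real L"
    using astar_theta_facts(3) P by (intro mult_mono) auto
  then show ?thesis by simp
qed

lemma sum_inverse_le_ln_theta: "(\<Sum>j\<in>{j0..<P}. 1 / real j) \<le> ln (1 / (2 * theta))"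
proof -
  have th: "1 \<le> theta * real L" "0 < theta" using theta_L_ge astar_theta_facts by auto
  then have "(\<Sum>j\<in>{j0..<P}. 1 / real j) \<le> ln (real P - 1) - ln (real j0 - 1)"
    using j0 h(3) by (intro sum_inverse_le_ln) linarith+
  also have "\<dots> = ln ((real P - 1) / (real j0 - 1))" using j0 th P by (simp add: ln_div)
  also have "\<dots> \<le> ln (real P / (theta * real L))"
    using j0 th P by (intro ln_mono frac_le) auto
  also have "real P / (theta * real L) = 1 / (2 * theta)" using th P by (simp add: field_simps)
  finally show ?thesis .
qed

lemma two_le_j0: "2 \<le> j0"
  using theta_L_ge j0 by linarith

lemma balance_le: "theta * (1 + excess) + excess * ln (1 / (2 * theta)) + excess \<le> 1 - \<epsilon> / 2"
proof -
  define C where "C = theta + ln (1 / (2 * theta)) + 1"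
  have C: "1 \<le> C" "theta + astar * C = 1"
    using astar_theta_facts by (auto simp: C_def)
  have "theta * (1 + excess) + excess * ln (1 / (2 * theta)) + excess = theta + astar * C - \<epsilon> / 2 * C"
    by (simp add: C_def excess_def algebra_simps)
  also have "\<dots> \<le> 1 - \<epsilon> / 2 * 1"
    using C eps by (simp add: mult_left_mono)
  finally show ?thesis by simp
qed

text \<open>The additive error of the bound on the number of nearly full bins after one round.\<close>
definition round_slack :: real where
  "round_slack = (1 + excess) + \<beta> + \<epsilon>\<^sup>2 / 1024 * real M / real h"

lemma round_slack_sum_le: "real L * round_slack \<le> real L * (1 + excess) + real L * \<beta> + \<epsilon> / 32 * real M"
proof -
  have "real L / real h \<le> 32 / \<epsilon>" using h(1) eps h_pos by (simp add: field_simps)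
  then have "\<epsilon>\<^sup>2 / 1024 * real M * (real L / real h) \<le> \<epsilon>\<^sup>2 / 1024 * real M * (32 / \<epsilon>)"
    by (intro mult_left_mono) auto
  then show ?thesis using eps by (simp add: round_slack_def algebra_simps power2_eq_square)
qed

text \<open>\<open>N x\<close> below stands for the number of bins holding more than \<open>x\<close> small items: its sum over
  \<open>x < L\<close> is \<open>M\<close>. It is bounded by the number of bins on \<open>[0, j0 + h)\<close>, by the rounds on
  \<open>[j0 + h, P + h)\<close>, and by monotonicity and the last round on \<open>[P + h, L)\<close>.\<close>
lemma profile_low_le:
  fixes N :: "nat \<Rightarrow> real"
  assumes "\<And>x. N x \<le> (1 + excess) * real K + \<beta>"
  shows "(\<Sum>x\<in>{0..<j0 + h}. N x) \<le> ((theta + \<epsilon> / 32) * real L + 3) * (1 + excess) * real K + real L * \<beta>"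
proof -
  have "(\<Sum>x\<in>{0..<j0 + h}. N x) \<le> real (j0 + h) * ((1 + excess) * real K + \<beta>)"
    using sum_mono[of "{0..<j0 + h}" N "\<lambda>_. (1 + excess) * real K + \<beta>"] assms by simp
  also have "\<dots> = real (j0 + h) * (1 + excess) * real K + real (j0 + h) * \<beta>"
    by (simp add: algebra_simps)
  also have "\<dots> \<le> ((theta + \<epsilon> / 32) * real L + 3) * (1 + excess) * real K + real L * \<beta>"
    using j0 h excess_bounds beta_nonneg by (intro add_mono mult_right_mono) (auto simp: algebra_simps)
  finally show ?thesis .
qed

lemma profile_mid_le:
  fixes N :: "nat \<Rightarrow> real"
  assumes "\<And>j. j0 \<le> j \<Longrightarrow> j < P \<Longrightarrow> N (j + h) \<le> excess * real M / real j + round_slack"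
  shows "(\<Sum>x\<in>{j0 + h..<P + h}. N x) \<le> excess * real M * ln (1 / (2 * theta)) + real (P - j0) * round_slack"
proof -
  have "(\<Sum>x\<in>{j0 + h..<P + h}. N x) = (\<Sum>j\<in>{j0..<P}. N (j + h))"
    by (rule sum.shift_bounds_nat_ivl)
  also have "\<dots> \<le> (\<Sum>j\<in>{j0..<P}. excess * real M / real j + round_slack)"
    by (rule sum_mono) (use assms in auto)
  also have "\<dots> = excess * real M * (\<Sum>j\<in>{j0..<P}. 1 / real j) + real (P - j0) * round_slack"
    by (simp add: sum.distrib sum_distrib_left)
  also have "\<dots> \<le> excess * real M * ln (1 / (2 * theta)) + real (P - j0) * round_slack"
    using sum_inverse_le_ln_theta excess_bounds by (simp add: mult_left_mono)
  finally show ?thesis .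
qed

lemma profile_high_le:
  fixes N :: "nat \<Rightarrow> real"
  assumes anti: "\<And>x y. x \<le> y \<Longrightarrow> N y \<le> N x"
    and round: "\<And>j. j0 \<le> j \<Longrightarrow> j < P \<Longrightarrow> N (j + h) \<le> excess * real M / real j + round_slack"
  shows "(\<Sum>x\<in>{P + h..<L}. N x)
    \<le> excess * real M * (1 + 1 / real (P - 1)) + real (L - (P + h)) * round_slack"
proof -
  have "(\<Sum>x\<in>{P + h..<L}. N x) \<le> (\<Sum>x\<in>{P + h..<L}. excess * real M / real (P - 1) + round_slack)"
  proof (rule sum_mono)
    fix x assume "x \<in> {P + h..<L}"
    then have "N x \<le> N (P - 1 + h)" by (intro anti) auto
    also have "\<dots> \<le> excess * real M / real (P - 1) + round_slack"
      using round[of "P - 1"] h(3) h_pos by simp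
    finally show "N x \<le> excess * real M / real (P - 1) + round_slack" .
  qed
  also have "\<dots> = real (L - (P + h)) * (excess * real M / real (P - 1)) + real (L - (P + h)) * round_slack"
    using P by (simp add: distrib_left of_nat_diff)
  also have "real (L - (P + h)) * (excess * real M / real (P - 1)) \<le> real P * (excess * real M / real (P - 1))"
    using excess_bounds by (intro mult_right_mono) auto
  also have "real P * (excess * real M / real (P - 1)) = excess * real M * (1 + 1 / real (P - 1))"
    using P by (simp add: field_simps of_nat_diff)
  finally show ?thesis by simp
qed

lemma profile_sum_le:
  fixes N :: "nat \<Rightarrow> real"
  assumes sum: "real M = (\<Sum>x<L. N x)" and anti: "\<And>x y. x \<le> y \<Longrightarrow> N y \<le> N x"
    and bins: "\<And>x. N x \<le> (1 + excess) * real K + \<beta>"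
    and round: "\<And>j. j0 \<le> j \<Longrightarrow> j < P \<Longrightarrow> N (j + h) \<le> excess * real M / real j + round_slack"
  shows "real M \<le> real M * (theta * (1 + excess) + excess * ln (1 / (2 * theta)) + excess
            + \<epsilon> / 32 * (1 + excess) + excess / real (P - 1) + \<epsilon> / 32)
          + 3 * (1 + excess) * real K + real L * (1 + excess) + 2 * real L * \<beta>"
proof -
  have "(\<Sum>x<L. N x) = (\<Sum>x\<in>{0..<j0 + h}. N x) + (\<Sum>x\<in>{j0 + h..<P + h}. N x) + (\<Sum>x\<in>{P + h..<L}. N x)"
    using h(3) by (simp add: lessThan_atLeast0 sum.atLeastLessThan_concat)
  moreover have "real (P - j0) * round_slack + real (L - (P + h)) * round_slack \<le> real L * round_slack"
  proof -
    have "0 \<le> round_slack" using excess_bounds beta_nonneg by (simp add: round_slack_def)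
    moreover have "real (P - j0) + real (L - (P + h)) \<le> real L" using h(3) by simp
    ultimately show ?thesis by (metis distrib_right mult_right_mono)
  qed
  ultimately have "real M \<le> ((theta + \<epsilon> / 32) * real L + 3) * (1 + excess) * real K + real L * \<beta>
      + excess * real M * ln (1 / (2 * theta)) + excess * real M * (1 + 1 / real (P - 1))
      + (real L * (1 + excess) + real L * \<beta> + \<epsilon> / 32 * real M)"
    using sum profile_low_le[of N, OF bins] profile_mid_le[of N, OF round] profile_high_le[of N, OF anti round]
      round_slack_sum_le by linarith
  also have "\<dots> = real M * (theta * (1 + excess) + excess * ln (1 / (2 * theta)) + excess
            + \<epsilon> / 32 * (1 + excess) + excess / real (P - 1) + \<epsilon> / 32)
          + 3 * (1 + excess) * real K + real L * (1 + excess) + 2 * real L * \<beta>"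
    by (simp add: field_simps)
  finally show ?thesis .
qed

lemma no_thin_profile:
  fixes N :: "nat \<Rightarrow> real"
  assumes "real M = (\<Sum>x<L. N x)" "\<And>x y. x \<le> y \<Longrightarrow> N y \<le> N x"
    "\<And>x. N x \<le> (1 + excess) * real K + \<beta>"
    "\<And>j. j0 \<le> j \<Longrightarrow> j < P \<Longrightarrow> N (j + h) \<le> excess * real M / real j + round_slack"
  shows False
proof -
  have ex: "0 \<le> excess" "excess \<le> 1" by (rule excess_bounds)+
  have KL: "0 < real K" "0 < real L" using K P by auto
  have "3 * (1 + excess) * real K + real L * (1 + excess) + 2 * real L * \<beta>
      = real M * (3 * (1 + excess) / real L + (1 + excess) / real K + 2 * \<beta> / real K)"
    using KL by (simp add: field_simps)
  then have "real M * 1 \<le> real M * (theta * (1 + excess) + excess * ln (1 / (2 * theta)) + excess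
            + \<epsilon> / 32 * (1 + excess) + excess / real (P - 1) + \<epsilon> / 32
            + 3 * (1 + excess) / real L + (1 + excess) / real K + 2 * \<beta> / real K)"
    using profile_sum_le[OF assms] by (simp add: distrib_left)
  then have "1 \<le> theta * (1 + excess) + excess * ln (1 / (2 * theta)) + excess
            + \<epsilon> / 32 * (1 + excess) + excess / real (P - 1) + \<epsilon> / 32
            + 3 * (1 + excess) / real L + (1 + excess) / real K + 2 * \<beta> / real K"
    using KL by (simp only: mult_le_cancel_left_pos of_nat_0_less_iff mult_pos_pos)
  moreover have "\<epsilon> / 32 * (1 + excess) \<le> \<epsilon> / 16" using ex eps by simp
  moreover have "excess / real (P - 1) \<le> 1 / real (P - 1)" using ex by (simp add: divide_right_mono)
  moreover have "3 * (1 + excess) / real L \<le> 6 / real L" using ex by (intro divide_right_mono) auto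
  moreover have "(1 + excess) / real K \<le> 2 / real K" using ex by (simp add: divide_right_mono)
  ultimately show False using balance_le small eps by argo
qed

lemma big_block_size_le:
  assumes "j0 \<le> j"
  shows "M div j \<le> 4 * K"
proof -
  have "1/4 * real L \<le> theta * real L"
    using astar_theta_facts(3) by (intro mult_right_mono) auto
  then have "L \<le> 4 * j" using j0(1) assms by linarith
  then have "M div j \<le> (4 * K * j) div j" by (intro div_le_mono) (simp add: algebra_simps)
  also have "\<dots> = 4 * K" using assms theta_L_ge j0 by simp
  finally show ?thesis .
qed

lemma some_round_moves_many:
  assumes p: "valid_input p" "input_size_le p n" "items_after p = small_items M (1 / real L)"
  shows "\<exists>j\<in>{j0..<P}. \<epsilon>\<^sup>2 / 1024 * real M
    < real (card {i. i < M \<and> A p i \<noteq> A (p @ ins_block M (1 - real j / real L) (M div j)) i})"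
proof (rule ccontr)
  assume few: "\<not> ?thesis"
  define c where "c b = card {i. i < M \<and> A p i = b}" for b
  define N where "N x = real (card {b\<in>A p ` {..<M}. x < c b})" for x
  have feas: "feasible_packing (small_items M (1 / real L)) (A p)"
    using competitive_on_final(1)[OF competitive_excess p(1,2)] p(3) by simp
  have "c b \<le> L" for b
    using card_fiber_le_of_feasible_small_items[OF feas] P by (simp add: c_def)
  then have "real M = (\<Sum>x<L. N x)"
    using card_eq_sum_layers[of M "A p" L] by (simp add: N_def c_def flip: of_nat_sum)
  moreover have "N y \<le> N x" if "x \<le> y" for x y
    unfolding N_def using that by (intro of_nat_mono card_mono) auto
  moreover have "N x \<le> (1 + excess) * real K + \<beta>" for x
  proof -
    have "N x \<le> real (bins_used (small_items M (1 / real L)) (A p))"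
      unfolding N_def bins_used_def dom_small_items by (intro of_nat_mono card_mono) auto
    also have "\<dots> \<le> (1 + excess) * real (OPT (small_items M (1 / real L))) + \<beta>"
      using competitive_on_final(2)[OF competitive_excess p(1,2)] p(3) by simp
    also have "\<dots> \<le> (1 + excess) * real K + \<beta>"
      using OPT_small_items[of L K] excess_bounds P by (intro add_right_mono mult_left_mono) auto
    finally show ?thesis .
  qed
  moreover have "N (j + h) \<le> excess * real M / real j + round_slack"
    if j: "j0 \<le> j" "j < P" for j
  proof -
    have "N (j + h) \<le> excess * real M / real j + (1 + excess) + \<beta>
        + real (card {i. i < M \<and> A p i \<noteq> A (p @ ins_block M (1 - real j / real L) (M div j)) i}) / real h"
      unfolding N_def c_def using j two_le_j0 room big_block_size_le[OF j(1)] excess_bounds h_pos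
      by (intro full_bins_le_after_big_block[OF competitive_excess _ p]) auto
    also have "\<dots> \<le> excess * real M / real j + (1 + excess) + \<beta> + \<epsilon>\<^sup>2 / 1024 * real M / real h"
    proof -
      have "real (card {i. i < M \<and> A p i \<noteq> A (p @ ins_block M (1 - real j / real L) (M div j)) i})
          \<le> \<epsilon>\<^sup>2 / 1024 * real M"
        using few j by (simp add: not_less)
      from divide_right_mono[OF this, of "real h"] show ?thesis by simp
    qed
    finally show ?thesis by (simp add: round_slack_def)
  qed
  ultimately show False by (rule no_thin_profile)
qed

text \<open>A round inserts the big items of the forcing round and deletes them again, which
  restores the item set.\<close>
lemma round_step:
  assumes p: "valid_input p" "input_size_le p n" "items_after p = small_items M (1 / real L)"
  shows "\<exists>q. (valid_input q \<and> input_size_le q n \<and> items_after q = small_items M (1 / real L))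
    \<and> real (total_moves A p) + \<epsilon>\<^sup>2 / 1024 * real M \<le> real (total_moves A q)
    \<and> length q \<le> length p + 8 * K"
proof -
  obtain j where j: "j0 \<le> j" "j < P" and many: "\<epsilon>\<^sup>2 / 1024 * real M
      < real (card {i. i < M \<and> A p i \<noteq> A (p @ ins_block M (1 - real j / real L) (M div j)) i})"
    using some_round_moves_many[OF p] by auto
  define x where "x = 1 - real j / real L"
  define m where "m = M div j"
  define q where "q = p @ ins_block M x m @ del_block M m"
  have x: "0 \<le> x" "x \<le> 1" using j by (auto simp: x_def field_simps)
  have m: "m \<le> 4 * K" using big_block_size_le[OF j(1)] by (simp add: m_def)
  have valid_ins: "valid_input (p @ ins_block M x m)"
    by (rule valid_input_append_ins_block[OF p(1) _ x]) (simp add: p(3) small_items_def)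
  have "dom (items_after p) \<union> {M..<M + m} = {..<M + m}" by (auto simp: p(3) dom_small_items)
  then have size_ins: "input_size_le (p @ ins_block M x m) n"
    using m room by (intro input_size_le_append_ins_block[OF p(2)]) simp
  have "valid_input q"
    unfolding q_def append_assoc[symmetric]
    by (rule valid_input_append_del_block[OF valid_ins]) (simp add: items_after_append_ins_block)
  moreover have "input_size_le q n"
    unfolding q_def append_assoc[symmetric] by (rule input_size_le_append_del_block[OF size_ins])
  moreover have "items_after q = small_items M (1 / real L)"
    unfolding q_def append_assoc[symmetric] items_after_append_del_block items_after_append_ins_block p(3)
    by (auto simp: small_items_def fun_eq_iff)
  moreover have "total_moves A p + card {i\<in>{..<M}. A p i \<noteq> A (p @ ins_block M x m) i} \<le> total_moves A q"
    unfolding q_def by (rule total_moves_ge_changed_by_ins_block) (auto simp: p(3) dom_small_items)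
  then have "real (total_moves A p) + \<epsilon>\<^sup>2 / 1024 * real M \<le> real (total_moves A q)"
    using many by (simp add: x_def m_def lessThan_def)
  moreover have "length q \<le> length p + 8 * K" using m by (simp add: q_def)
  ultimately show ?thesis by blast
qed

lemma many_moves:
  "\<exists>\<sigma>. valid_input \<sigma> \<and> input_size_le \<sigma> n
    \<and> real L * (\<epsilon>\<^sup>2 / 1024 * real M) \<le> real (total_moves A \<sigma>) \<and> length \<sigma> \<le> M + L * (8 * K)"
proof -
  define Q where "Q \<sigma> \<longleftrightarrow> valid_input \<sigma> \<and> input_size_le \<sigma> n \<and> items_after \<sigma> = small_items M (1 / real L)"
    for \<sigma>
  have "valid_input ([] @ ins_block 0 (1 / real L) M)"
    by (rule valid_input_append_ins_block[OF valid_input_Nil]) (use P in \<open>auto simp: items_after_Nil\<close>)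
  moreover have "input_size_le ([] @ ins_block 0 (1 / real L) M) n"
    using room by (intro input_size_le_append_ins_block[OF input_size_le_Nil]) (simp add: items_after_Nil)
  moreover have "items_after ([] @ ins_block 0 (1 / real L) M) = small_items M (1 / real L)"
    unfolding items_after_append_ins_block by (auto simp: items_after_Nil small_items_def fun_eq_iff)
  ultimately have "Q (ins_block 0 (1 / real L) M)" by (simp add: Q_def)
  from iterate_rounds[of Q, OF this, of A "\<epsilon>\<^sup>2 / 1024 * real M" "8 * K" L]
  show ?thesis using round_step unfolding Q_def by fastforce
qed

text \<open>The constant: \<open>147456 = 9 * 16 * 1024\<close>, since the input has length at most \<open>9 * M\<close>.\<close>
lemma recourse_lower_bound:
  assumes V: "0 \<le> V" "V \<le> 16 * real L"
  shows "\<exists>\<sigma>. valid_input \<sigma> \<and> input_size_le \<sigma> n \<and> length \<sigma> > 0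
    \<and> 1 / 147456 * \<epsilon>\<^sup>2 * V * real (length \<sigma>) \<le> real (total_moves A \<sigma>)"
proof -
  obtain \<sigma> where \<sigma>: "valid_input \<sigma>" "input_size_le \<sigma> n"
    and moves: "real L * (\<epsilon>\<^sup>2 / 1024 * real M) \<le> real (total_moves A \<sigma>)"
    and len: "length \<sigma> \<le> M + L * (8 * K)"
    using many_moves by blast
  have "0 < real L * (\<epsilon>\<^sup>2 / 1024 * real M)" using K P eps by simp
  then have "\<sigma> \<noteq> []" using moves by (auto simp: total_moves_def)
  have "real (length \<sigma>) \<le> real (9 * M)"
    using len by (simp only: of_nat_le_iff) (simp add: algebra_simps)
  then have "1 / 147456 * \<epsilon>\<^sup>2 * V * real (length \<sigma>) \<le> 1 / 147456 * \<epsilon>\<^sup>2 * V * (9 * real M)"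
    using V by (intro mult_left_mono) auto
  also have "\<dots> = V / 16 * (\<epsilon>\<^sup>2 / 1024 * real M)" by simp
  also have "\<dots> \<le> real L * (\<epsilon>\<^sup>2 / 1024 * real M)"
    using V eps by (intro mult_right_mono) auto
  also have "\<dots> \<le> real (total_moves A \<sigma>)" by (rule moves)
  finally show ?thesis using \<sigma> \<open>\<sigma> \<noteq> []\<close> by blast
qed

end

section \<open>Choice of the parameters\<close>

lemma parameter_errors_small:
  fixes U V \<epsilon> \<beta> :: real and K P :: nat
  assumes e: "0 < \<epsilon>" and U: "4096 / \<epsilon> < U" and V: "20480 / \<epsilon> < V"
    and K: "U / 16 \<le> real K" and P: "V / 32 \<le> real P" "12 \<le> P"
    and b: "0 \<le> \<beta>" "\<beta> < \<epsilon> * U / 2048"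
  shows "6 / real (2 * P) + 1 / real (P - 1) + 2 / real K + 2 * \<beta> / real K < \<epsilon> / 32"
proof -
  have "0 < 4096 / \<epsilon>" "0 < 20480 / \<epsilon>" using e by auto
  then have UV: "0 < U" "0 < V" using U V by linarith+
  have "V / 64 \<le> real (P - 1)" using P by (simp add: of_nat_diff)
  then have "6 / real (2 * P) + 1 / real (P - 1) \<le> 6 / (V / 16) + 1 / (V / 64)"
    using P UV by (intro add_mono divide_left_mono) auto
  also have "\<dots> = 160 / V" by simp
  also have "\<dots> < \<epsilon> / 128" using V UV e by (simp add: divide_less_eq field_simps)
  finally have PV: "6 / real (2 * P) + 1 / real (P - 1) < \<epsilon> / 128" .
  have "2 / real K + 2 * \<beta> / real K \<le> 2 / (U / 16) + 2 * \<beta> / (U / 16)"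
    using K UV b by (intro add_mono divide_left_mono) auto
  also have "\<dots> = 32 / U + 32 * \<beta> / U" by simp
  also have "\<dots> < \<epsilon> / 128 + \<epsilon> / 64"
    using U UV e b by (intro add_strict_mono) (simp_all add: divide_less_eq field_simps)
  finally show ?thesis using PV by simp
qed

lemma round_range_exists:
  fixes \<epsilon> :: real and P :: nat
  assumes "0 < \<epsilon>" "\<epsilon> \<le> 1" "12 \<le> P"
  obtains h j0 :: nat
  where "theta * real (2 * P) \<le> real j0 - 1" "real j0 \<le> theta * real (2 * P) + 2"
    "\<epsilon> / 32 * real (2 * P) \<le> real h" "real h \<le> \<epsilon> / 32 * real (2 * P) + 1" "j0 + h \<le> P"
proof -
  define h where "h = nat \<lceil>\<epsilon> / 32 * real (2 * P)\<rceil>"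
  define j0 where "j0 = nat \<lfloor>theta * real (2 * P)\<rfloor> + 2"
  have th: "1/4 \<le> theta" "theta \<le> 1/3" using astar_theta_facts by auto
  have hb: "\<epsilon> / 32 * real (2 * P) \<le> real h" "real h \<le> \<epsilon> / 32 * real (2 * P) + 1"
    using assms ceiling_correct[of "\<epsilon> / 32 * real (2 * P)"] by (auto simp: h_def of_nat_nat)
  have "real j0 = of_int \<lfloor>theta * real (2 * P)\<rfloor> + 2" using th by (simp add: j0_def of_nat_nat)
  then have j0b: "theta * real (2 * P) \<le> real j0 - 1" "real j0 \<le> theta * real (2 * P) + 2"
    using floor_correct[of "theta * real (2 * P)"] by linarith+
  have "\<epsilon> / 32 * real (2 * P) \<le> 1 / 32 * real (2 * P)"
    using assms by (intro mult_right_mono) auto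
  moreover have "theta * real (2 * P) \<le> 1/3 * real (2 * P)"
    using th by (intro mult_right_mono) auto
  moreover have "12 \<le> real P" using assms by simp
  ultimately have "real j0 + real h \<le> real P" using hb j0b by linarith
  then show thesis using that hb j0b by simp
qed

lemma adversary_exists:
  fixes A :: algorithm and \<epsilon> \<delta> \<beta> :: real and n :: nat
  assumes d: "0 < \<delta>" "\<delta> < 1/2" and e: "0 < \<epsilon>" "\<epsilon> < 2 * astar" and n: "1 \<le> n"
    and U: "16 + 4096 / \<epsilon> \<le> real n powr \<delta>" and V: "384 + 20480 / \<epsilon> \<le> real n powr (1 - \<delta>)"
    and b: "\<beta> < 1 / 2048 * (\<epsilon> * real n powr \<delta>)"
    and comp: "competitive_on A (alpha_lb - \<epsilon>) \<beta> n"
  obtains K P h j0 where "adversary A \<epsilon> \<beta> n K P h j0" "real n powr (1 - \<delta>) \<le> 16 * real (2 * P)"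
proof -
  define U where "U = real n powr \<delta>"
  define V where "V = real n powr (1 - \<delta>)"
  define K where "K = nat \<lfloor>U / 8\<rfloor>"
  define P where "P = nat \<lfloor>V / 16\<rfloor>"
  have "0 < 4096 / \<epsilon>" "0 < 20480 / \<epsilon>" using e by auto
  then have U16: "16 \<le> U" and V384: "384 \<le> V" using U V unfolding U_def V_def by linarith+
  have UV: "U * V = real n" using n by (simp add: U_def V_def flip: powr_add)
  have Un: "U \<le> real n" unfolding U_def using n d by (intro order_trans[OF powr_mono[of \<delta> 1]]) auto
  have Kb: "real K \<le> U / 8" "U / 8 - 1 < real K"
    using U16 floor_correct[of "U / 8"] by (auto simp: K_def of_nat_nat)
  have Pb: "real P \<le> V / 16" "V / 16 - 1 < real P"
    using V384 floor_correct[of "V / 16"] by (auto simp: P_def of_nat_nat)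
  have P12: "12 \<le> P" using Pb V384 by linarith
  have "\<epsilon> \<le> 1" using e(2) astar_theta_facts(2) by simp
  then obtain h j0 where hj0: "theta * real (2 * P) \<le> real j0 - 1" "real j0 \<le> theta * real (2 * P) + 2"
    "\<epsilon> / 32 * real (2 * P) \<le> real h" "real h \<le> \<epsilon> / 32 * real (2 * P) + 1" "j0 + h \<le> P"
    by (rule round_range_exists[OF e(1) _ P12])
  have "adversary A \<epsilon> \<beta> n K P h j0"
  proof
    show "1 \<le> K" "2 \<le> P" using Kb U16 P12 by linarith+
    have "real (K * (2 * P)) \<le> U / 8 * (2 * (V / 16))"
      using Kb Pb by (simp only: of_nat_mult) (intro mult_mono, auto)
    then have "real (K * (2 * P) + 4 * K) \<le> real n"
      using UV Un Kb by simp
    then show "K * (2 * P) + 4 * K \<le> n" by (simp only: of_nat_le_iff)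
    show "6 / real (2 * P) + 1 / real (P - 1) + 2 / real K + 2 * \<beta> / real K < \<epsilon> / 32"
      using U V b Kb Pb U16 V384 P12 competitive_on_beta_nonneg[OF comp]
      by (intro parameter_errors_small[of \<epsilon> U V]) (auto simp: U_def V_def e)
  qed (fact comp e hj0)+
  moreover have "real n powr (1 - \<delta>) \<le> 16 * real (2 * P)" using Pb V384 by (simp add: V_def)
  ultimately show thesis by (rule that)
qed

lemma eventually_le_real_powr:
  assumes "0 < d"
  shows "\<forall>\<^sub>F n in sequentially. T \<le> real n powr d"
proof -
  define N where "N = nat \<lceil>max T 1 powr (1 / d)\<rceil>"
  have "T \<le> real n powr d" if "N \<le> n" for n
  proof -
    have "max T 1 powr (1 / d) \<le> real n" using that unfolding N_def by linarith
    then have "(max T 1 powr (1 / d)) powr d \<le> real n powr d" using assms by (intro powr_mono2) auto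
    then show ?thesis using assms by (simp add: powr_powr)
  qed
  then show ?thesis unfolding eventually_sequentially by blast
qed

lemma eventually_less_of_ratio_tendsto_zero:
  fixes \<beta> :: "nat \<Rightarrow> real"
  assumes lim: "(\<lambda>n. \<beta> n / (\<epsilon> * real n powr \<delta>)) \<longlonglongrightarrow> 0" and "0 < \<epsilon>" "0 < \<tau>"
  shows "\<forall>\<^sub>F n in sequentially. \<beta> n < \<tau> * (\<epsilon> * real n powr \<delta>)"
  using order_tendstoD(2)[OF lim \<open>0 < \<tau>\<close>] eventually_ge_at_top[of 1]
proof eventually_elim
  case (elim n)
  then have "0 < \<epsilon> * real n powr \<delta>" using assms by simp
  with elim show ?case by (simp add: divide_less_eq)
qed

lemma competitive_on_ratio_ge:
  assumes "competitive_on A r \<beta> n"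
  shows "real n \<le> max r 0 * real n + \<beta>"
proof -
  define \<sigma> where "\<sigma> = [] @ ins_block 0 1 n"
  have items: "items_after \<sigma> = small_items n 1"
    unfolding \<sigma>_def items_after_append_ins_block by (auto simp: items_after_Nil small_items_def fun_eq_iff)
  have "valid_input \<sigma>" unfolding \<sigma>_def
    by (rule valid_input_append_ins_block[OF valid_input_Nil]) (auto simp: items_after_Nil)
  moreover have "input_size_le \<sigma> n" unfolding \<sigma>_def
    by (rule input_size_le_append_ins_block[OF input_size_le_Nil]) (simp add: items_after_Nil)
  ultimately have feas: "feasible_packing (items_after \<sigma>) (A \<sigma>)"
    and bins: "real (bins_used (items_after \<sigma>) (A \<sigma>)) \<le> r * real (OPT (items_after \<sigma>)) + \<beta>"
    using competitive_on_final[OF assms] by auto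
  have "real n = (\<Sum>i<n. the (small_items n 1 i))"
    by (simp add: small_items_def)
  also have "\<dots> = (\<Sum>i\<in>dom (items_after \<sigma>). the (items_after \<sigma> i))"
    by (simp add: items dom_small_items)
  also have "\<dots> \<le> real (bins_used (items_after \<sigma>) (A \<sigma>))"
    by (rule total_size_le_bins_used[OF feas finite_dom_items_after])
  finally have n: "real n \<le> real (bins_used (items_after \<sigma>) (A \<sigma>))" .
  have "r * real (OPT (items_after \<sigma>)) \<le> max r 0 * real (OPT (items_after \<sigma>))"
    by (intro mult_right_mono) auto
  also have "\<dots> \<le> max r 0 * real n"
    using OPT_small_items[of 1 n] by (intro mult_left_mono) (auto simp: items)
  finally show ?thesis using n bins by linarith
qed

lemma no_competitive_algorithm_eventually:
  fixes \<beta> :: "nat \<Rightarrow> real"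
  assumes e: "2 * astar \<le> \<epsilon>" and d: "\<delta> \<le> 1"
    and lim: "(\<lambda>n. \<beta> n / (\<epsilon> * real n powr \<delta>)) \<longlonglongrightarrow> 0"
  shows "\<forall>\<^sub>F n in sequentially. \<forall>A. \<not> competitive_on A (alpha_lb - \<epsilon>) (\<beta> n) n"
proof -
  have a: "1/3 \<le> astar" "astar \<le> 1/2" using astar_theta_facts by simp_all
  then have "0 < \<epsilon>" "0 < astar / \<epsilon>" using e by auto
  from eventually_less_of_ratio_tendsto_zero[OF lim this] eventually_ge_at_top[of 1]
  show ?thesis
  proof eventually_elim
    case (elim n)
    have "real n powr \<delta> \<le> real n powr 1" using elim d by (intro powr_mono) auto
    then have "astar * real n powr \<delta> \<le> astar * real n" using a by (intro mult_left_mono) auto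
    then have \<beta>: "\<beta> n < astar * real n" using elim \<open>0 < \<epsilon>\<close> by simp
    have "max (alpha_lb - \<epsilon>) 0 \<le> 1 - astar" using e a by (simp add: astar_def)
    then have "max (alpha_lb - \<epsilon>) 0 * real n \<le> (1 - astar) * real n" by (simp add: mult_right_mono)
    show ?case
    proof (intro allI notI)
      fix A assume "competitive_on A (alpha_lb - \<epsilon>) (\<beta> n) n"
      from competitive_on_ratio_ge[OF this] show False
        using \<open>max (alpha_lb - \<epsilon>) 0 * real n \<le> (1 - astar) * real n\<close> \<beta> by argo
    qed
  qed
qed

lemma recourse_lower_bound_eventually:
  fixes \<beta> :: "nat \<Rightarrow> real"
  assumes e: "0 < \<epsilon>" "\<epsilon> < 2 * astar" and d: "0 < \<delta>" "\<delta> < 1/2"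
    and lim: "(\<lambda>n. \<beta> n / (\<epsilon> * real n powr \<delta>)) \<longlonglongrightarrow> 0"
  shows "\<forall>\<^sub>F n in sequentially. \<forall>A. competitive_on A (alpha_lb - \<epsilon>) (\<beta> n) n \<longrightarrow>
    (\<exists>\<sigma>. valid_input \<sigma> \<and> input_size_le \<sigma> n \<and> length \<sigma> > 0 \<and>
       real (total_moves A \<sigma>) \<ge> 1 / 147456 * \<epsilon>\<^sup>2 * real n powr (1 - \<delta>) * real (length \<sigma>))"
proof -
  have d1: "0 < 1 - \<delta>" and \<tau>: "0 < (1 / 2048 :: real)" using d by simp_all
  from eventually_ge_at_top[of 1] eventually_le_real_powr[OF d(1), of "16 + 4096 / \<epsilon>"]
    eventually_le_real_powr[OF d1, of "384 + 20480 / \<epsilon>"]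
    eventually_less_of_ratio_tendsto_zero[OF lim e(1) \<tau>]
  show ?thesis
  proof eventually_elim
  case (elim n)
  show ?case
  proof (intro allI impI)
    fix A assume "competitive_on A (alpha_lb - \<epsilon>) (\<beta> n) n"
    then obtain K P h j0
      where "adversary A \<epsilon> (\<beta> n) n K P h j0" "real n powr (1 - \<delta>) \<le> 16 * real (2 * P)"
      by (rule adversary_exists[OF d e elim])
    from adversary.recourse_lower_bound[OF this(1) _ this(2)]
    show "\<exists>\<sigma>. valid_input \<sigma> \<and> input_size_le \<sigma> n \<and> length \<sigma> > 0 \<and>
       real (total_moves A \<sigma>) \<ge> 1 / 147456 * \<epsilon>\<^sup>2 * real n powr (1 - \<delta>) * real (length \<sigma>)"
      by simp
  qed
  qed
qed

theorem theorem2p1: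
  "\<exists>c > 0. \<forall>\<epsilon> > 0. \<forall>\<delta>. 0 < \<delta> \<and> \<delta> < 1/2 \<longrightarrow>
     (\<forall>\<beta> :: nat \<Rightarrow> real.
        (\<lambda>n. \<beta> n / (\<epsilon> * real n powr \<delta>)) \<longlonglongrightarrow> 0 \<longrightarrow>
        (\<exists>N. \<forall>n \<ge> N. \<forall>A :: algorithm.
           competitive_on A (alpha_lb - \<epsilon>) (\<beta> n) n \<longrightarrow>
           (\<exists>\<sigma>. valid_input \<sigma> \<and> input_size_le \<sigma> n \<and> length \<sigma> > 0 \<and>
                 real (total_moves A \<sigma>)
                   \<ge> c * \<epsilon>\<^sup>2 * real n powr (1 - \<delta>) * real (length \<sigma>))))"
proof (intro exI[of _ "1 / 147456"] conjI allI impI)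
  fix \<epsilon> \<delta> :: real and \<beta> :: "nat \<Rightarrow> real"
  assume e: "0 < \<epsilon>" and d: "0 < \<delta> \<and> \<delta> < 1/2"
    and lim: "(\<lambda>n. \<beta> n / (\<epsilon> * real n powr \<delta>)) \<longlonglongrightarrow> 0"
  have "\<forall>\<^sub>F n in sequentially. \<forall>A. competitive_on A (alpha_lb - \<epsilon>) (\<beta> n) n \<longrightarrow>
    (\<exists>\<sigma>. valid_input \<sigma> \<and> input_size_le \<sigma> n \<and> length \<sigma> > 0 \<and>
       real (total_moves A \<sigma>) \<ge> 1 / 147456 * \<epsilon>\<^sup>2 * real n powr (1 - \<delta>) * real (length \<sigma>))"
  proof (cases "\<epsilon> < 2 * astar")
    case True
    then show ?thesis using recourse_lower_bound_eventually e d lim by blast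
  next
    case False
    with no_competitive_algorithm_eventually[of \<epsilon> \<delta> \<beta>] d lim show ?thesis
      by (auto elim!: eventually_mono)
  qed
  then show "\<exists>N. \<forall>n \<ge> N. \<forall>A :: algorithm. competitive_on A (alpha_lb - \<epsilon>) (\<beta> n) n \<longrightarrow>
      (\<exists>\<sigma>. valid_input \<sigma> \<and> input_size_le \<sigma> n \<and> length \<sigma> > 0 \<and>
         real (total_moves A \<sigma>) \<ge> 1 / 147456 * \<epsilon>\<^sup>2 * real n powr (1 - \<delta>) * real (length \<sigma>))"
    by (simp add: eventually_sequentially)
qed simp


end
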